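(* Let $n\ge 2$ and let $S=[A_0,\dots,A_n]$ be an $n$-pre-kite. If the circumcenter and the centroid of $S$ coincide, then $S$ is a regular $n$-simplex.
   Context: An $n$-simplex is the convex hull of $n+1$ affinely independent points in a Euclidean space. It is an $n$-pre-kite if one of its facets (the $(n-1)$-simplex obtained by deleting one vertex) is a regular $(n-1)$-simplex, i.e. has all edges of equal length. The circumcenter of $S$ is the center of the $(n-1)$-sphere in the affine hull of $S$ passing through all vertices; the centroid is $(A_0+\cdots+A_n)/(n+1)$. $S$ is regular if all its edges have the same length. *)

theory Defs
  imports "HOL-Analysis.Analysis"
begin

definition is_simplex :: "nat \<Rightarrow> (nat \<Rightarrow> 'a::euclidean_space) \<Rightarrow> bool" where
  "is_simplex n A \<longleftrightarrow> inj_on A {0..n} \<and> \<not> affine_dependent (A ` {0..n})"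

definition is_pre_kite :: "nat \<Rightarrow> (nat \<Rightarrow> 'a::euclidean_space) \<Rightarrow> bool" where
  "is_pre_kite n A \<longleftrightarrow> is_simplex n A \<and>
     (\<exists>k\<le>n. \<forall>i\<le>n. \<forall>j\<le>n. \<forall>p\<le>n. \<forall>q\<le>n.
        i \<noteq> k \<and> j \<noteq> k \<and> p \<noteq> k \<and> q \<noteq> k \<and> i \<noteq> j \<and> p \<noteq> q
        \<longrightarrow> dist (A i) (A j) = dist (A p) (A q))"

definition circumcenter :: "nat \<Rightarrow> (nat \<Rightarrow> 'a::euclidean_space) \<Rightarrow> 'a" where
  "circumcenter n A = (THE c. c \<in> affine hull (A ` {0..n}) \<and>
      (\<forall>i\<le>n. dist c (A i) = dist c (A 0)))"

definition centroid :: "nat \<Rightarrow> (nat \<Rightarrow> 'a::euclidean_space) \<Rightarrow> 'a" where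
  "centroid n A = (1 / real (n + 1)) *\<^sub>R (\<Sum>i\<le>n. A i)"

definition is_regular_simplex :: "nat \<Rightarrow> (nat \<Rightarrow> 'a::euclidean_space) \<Rightarrow> bool" where
  "is_regular_simplex n A \<longleftrightarrow> is_simplex n A \<and>
     (\<forall>i\<le>n. \<forall>j\<le>n. \<forall>p\<le>n. \<forall>q\<le>n. i \<noteq> j \<and> p \<noteq> q
        \<longrightarrow> dist (A i) (A j) = dist (A p) (A q))"

end

theory Submission
  imports Defs
begin

text \<open>
  For every point x, the identity of Leibniz gives
  \<open>\<Sum>\<^sub>l |x - A\<^sub>l|\<^sup>2 = (n+1) |x - G|\<^sup>2 + \<Sum>\<^sub>l |A\<^sub>l - G|\<^sup>2\<close> with G the centroid.
  If the centroid is also the circumcenter, \<open>|A\<^sub>i - G|\<close> does not depend on i, hence neither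
  does the sum \<open>S\<^sub>i\<close> of the squared edge lengths at the vertex \<open>A\<^sub>i\<close>.
  In a pre-kite with apex \<open>A\<^sub>k\<close> and facet edge length d this sum is
  \<open>(n-1) d\<^sup>2 + |A\<^sub>i - A\<^sub>k|\<^sup>2\<close> for \<open>i \<noteq> k\<close>, so all lateral edges have a common length e,
  and comparing with \<open>S\<^sub>k = n e\<^sup>2\<close> gives \<open>(n-1)(e\<^sup>2 - d\<^sup>2) = 0\<close>, i.e. e = d.
\<close>

lemma span_eq_if_inner_eq:
  fixes x y :: "'a::real_inner"
  assumes "x \<in> span W" "y \<in> span W" "\<And>w. w \<in> W \<Longrightarrow> x \<bullet> w = y \<bullet> w"
  shows "x = y"
proof -
  have "orthogonal (x - y) (x - y)"
  proof (rule orthogonal_to_span)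
    show "x - y \<in> span W" using assms(1,2) by (rule span_diff)
  qed (simp add: orthogonal_def inner_diff_left assms(3))
  then show ?thesis by (simp add: orthogonal_def)
qed

lemma subspace_endomorphism_surjective:
  fixes T :: "'a::euclidean_space \<Rightarrow> 'a"
  assumes "linear T" "subspace S" "T ` S \<subseteq> S" "inj_on T S"
  shows "T ` S = S"
proof (rule subspace_dim_equal)
  show "subspace (T ` S)" using assms(1,2) by (rule linear_subspace_image)
  show "dim S \<le> dim (T ` S)"
    using dim_image_eq[OF assms(1), of S] assms(2,4) by (metis order_refl span_eq_iff)
qed (use assms in auto)

lemma exists_in_span_inner_eq:
  fixes W :: "'a::euclidean_space set" and f :: "'a \<Rightarrow> real"
  assumes "independent W"
  obtains x where "x \<in> span W" "\<And>w. w \<in> W \<Longrightarrow> x \<bullet> w = f w"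
proof -
  have "finite W" using assms by (simp add: independent_explicit)
  define T where "T x = (\<Sum>w\<in>W. (x \<bullet> w) *\<^sub>R w)" for x :: 'a
  have "linear T"
    unfolding T_def
    by (rule linearI) (simp_all add: inner_add_left scaleR_add_left sum.distrib scaleR_sum_right)
  have T_span: "T x \<in> span W" for x
    unfolding T_def by (auto intro!: span_sum span_scale intro: span_base)
  have "inj_on T (span W)"
  proof (subst linear_inj_on_iff_eq_0[OF \<open>linear T\<close> subspace_span], intro ballI impI)
    fix x assume x: "x \<in> span W" "T x = 0"
    \<comment> \<open>\<open>T\<close> is the Gram operator of W, so \<open>T x \<bullet> x\<close> is a sum of squares\<close>
    have "T x \<bullet> x = (\<Sum>w\<in>W. (x \<bullet> w) ^ 2)"
      unfolding T_def inner_sum_left by (simp add: power2_eq_square inner_commute)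
    then have "\<forall>w\<in>W. (x \<bullet> w) ^ 2 = 0"
      using x(2) sum_nonneg_eq_0_iff[OF \<open>finite W\<close>, of "\<lambda>w. (x \<bullet> w) ^ 2"] by simp
    then show "x = 0" using span_eq_if_inner_eq[OF x(1) span_zero] by simp
  qed
  then have surj: "T ` span W = span W"
    using subspace_endomorphism_surjective[OF \<open>linear T\<close> subspace_span] T_span by blast
  have "(\<Sum>w\<in>W. f w *\<^sub>R w) \<in> span W" by (auto intro!: span_sum span_scale intro: span_base)
  then obtain x where x: "x \<in> span W" "T x = (\<Sum>w\<in>W. f w *\<^sub>R w)"
    by (metis surj imageE)
  then have "(\<Sum>w\<in>W. (x \<bullet> w - f w) *\<^sub>R w) = 0"
    unfolding T_def by (simp add: scaleR_diff_left sum_subtractf)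
  then have "\<forall>w\<in>W. x \<bullet> w - f w = 0"
    using assms by (auto simp: independent_explicit)
  with x(1) that show thesis by simp
qed

lemma norm_diff_power2:
  fixes x y :: "'a::real_inner"
  shows "norm (x - y) ^ 2 = norm x ^ 2 - 2 * (x \<bullet> y) + norm y ^ 2"
  using dot_norm_neg[of x y] by simp

lemma dist_eq_dist_iff_inner:
  fixes a c p :: "'a::real_inner"
  shows "dist c p = dist c a \<longleftrightarrow> (c - a) \<bullet> (p - a) = (p - a) \<bullet> (p - a) / 2"
proof -
  have sq: "dist c p ^ 2 = dist c a ^ 2 - 2 * ((c - a) \<bullet> (p - a)) + (p - a) \<bullet> (p - a)"
    using norm_diff_power2[of "c - a" "p - a"] by (simp add: dist_norm power2_norm_eq_inner[of "p - a"])
  have "dist c p = dist c a \<longleftrightarrow> dist c p ^ 2 = dist c a ^ 2"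
    by (simp add: power2_eq_iff_nonneg)
  also have "\<dots> \<longleftrightarrow> (c - a) \<bullet> (p - a) = (p - a) \<bullet> (p - a) / 2"
    unfolding sq by linarith
  finally show ?thesis .
qed

lemma ex1_equidistant_in_affine_hull:
  fixes P :: "'a::euclidean_space set"
  assumes "\<not> affine_dependent P" "a \<in> P"
  shows "\<exists>!c. c \<in> affine hull P \<and> (\<forall>p\<in>P. dist c p = dist c a)"
proof -
  define W where "W = (\<lambda>p. p - a) ` (P - {a})"
  have translate: "(\<lambda>x. - a + x) = (\<lambda>p. p - a)" by auto
  have "independent W"
    using assms affine_dependent_iff_dependent2[OF assms(2)] unfolding W_def translate by simp
  have hull: "c \<in> affine hull P \<longleftrightarrow> c - a \<in> span W" for c
  proof -
    have "affine hull P = (+) a ` span W"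
      using affine_hull_span2[OF assms(2)] unfolding W_def translate by simp
    then show ?thesis by (auto simp: image_iff intro: bexI[of _ "c - a"])
  qed
  have equi: "(\<forall>p\<in>P. dist c p = dist c a) \<longleftrightarrow> (\<forall>w\<in>W. (c - a) \<bullet> w = w \<bullet> w / 2)" for c
  proof -
    have "(\<forall>p\<in>P. dist c p = dist c a) \<longleftrightarrow> (\<forall>p\<in>P - {a}. dist c p = dist c a)"
      by blast
    then show ?thesis unfolding W_def by (simp add: dist_eq_dist_iff_inner)
  qed
  obtain x where x: "x \<in> span W" "\<And>w. w \<in> W \<Longrightarrow> x \<bullet> w = w \<bullet> w / 2"
    using exists_in_span_inner_eq[OF \<open>independent W\<close>, of "\<lambda>w. w \<bullet> w / 2"] by metis
  show ?thesis
  proof (rule ex1I[of _ "a + x"])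
    have "a + x \<in> affine hull P" using hull x(1) by simp
    moreover have "\<forall>p\<in>P. dist (a + x) p = dist (a + x) a" using equi x(2) by simp
    ultimately show "a + x \<in> affine hull P \<and> (\<forall>p\<in>P. dist (a + x) p = dist (a + x) a)" ..
  next
    fix c assume "c \<in> affine hull P \<and> (\<forall>p\<in>P. dist c p = dist c a)"
    then have c: "c - a \<in> span W" "\<And>w. w \<in> W \<Longrightarrow> (c - a) \<bullet> w = w \<bullet> w / 2"
      unfolding hull equi by blast+
    have "c - a = x"
      by (rule span_eq_if_inner_eq[OF c(1) x(1)]) (simp add: c(2) x(2))
    then show "c = a + x" by (simp add: algebra_simps)
  qed
qed

lemma dist_circumcenter_vertex:
  fixes A :: "nat \<Rightarrow> 'a::euclidean_space"
  assumes "is_simplex n A" "i \<le> n"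
  shows "dist (circumcenter n A) (A i) = dist (circumcenter n A) (A 0)"
proof -
  let ?V = "A ` {0..n}"
  have vertices: "(\<forall>p\<in>?V. dist c p = dist c (A 0)) \<longleftrightarrow> (\<forall>i\<le>n. dist c (A i) = dist c (A 0))"
    for c by (simp add: atLeast0AtMost) (simp add: Ball_def)
  have "\<exists>!c. c \<in> affine hull ?V \<and> (\<forall>p\<in>?V. dist c p = dist c (A 0))"
    using assms(1) unfolding is_simplex_def by (intro ex1_equidistant_in_affine_hull) auto
  then have "\<exists>!c. c \<in> affine hull ?V \<and> (\<forall>i\<le>n. dist c (A i) = dist c (A 0))"
    by (simp only: vertices)
  then have "\<forall>i\<le>n. dist (circumcenter n A) (A i) = dist (circumcenter n A) (A 0)"
    unfolding circumcenter_def by (rule theI'[THEN conjunct2])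
  with assms(2) show ?thesis by blast
qed

lemma sum_diff_centroid:
  fixes A :: "nat \<Rightarrow> 'a::euclidean_space"
  shows "(\<Sum>l\<le>n. A l - centroid n A) = 0"
  by (simp add: sum_subtractf centroid_def sum_constant_scaleR)

lemma sum_dist_sq_centroid:
  fixes A :: "nat \<Rightarrow> 'a::euclidean_space" and n :: nat and x :: 'a
  defines "G \<equiv> centroid n A"
  shows "(\<Sum>l\<le>n. dist x (A l) ^ 2) = real (n + 1) * dist x G ^ 2 + (\<Sum>l\<le>n. dist (A l) G ^ 2)"
proof -
  have "dist x (A l) ^ 2 = dist x G ^ 2 - 2 * ((x - G) \<bullet> (A l - G)) + dist (A l) G ^ 2" for l
    using norm_diff_power2[of "x - G" "A l - G"] by (simp add: dist_norm)
  moreover have "(\<Sum>l\<le>n. (x - G) \<bullet> (A l - G)) = 0"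
    using sum_diff_centroid[of A n] by (simp add: G_def flip: inner_sum_right)
  ultimately show ?thesis
    by (simp add: sum.distrib sum_subtractf flip: sum_distrib_left)
qed

lemma pre_kite_facet_edges:
  fixes A :: "nat \<Rightarrow> 'a::euclidean_space"
  assumes "is_pre_kite n A" "n \<ge> 2"
  obtains k d where "k \<le> n"
    "\<And>i j. \<lbrakk>i \<le> n; j \<le> n; i \<noteq> k; j \<noteq> k; i \<noteq> j\<rbrakk> \<Longrightarrow> dist (A i) (A j) = d"
proof -
  obtain k where k: "k \<le> n" and facet: "\<forall>i\<le>n. \<forall>j\<le>n. \<forall>p\<le>n. \<forall>q\<le>n.
      i \<noteq> k \<and> j \<noteq> k \<and> p \<noteq> k \<and> q \<noteq> k \<and> i \<noteq> j \<and> p \<noteq> q \<longrightarrow> dist (A i) (A j) = dist (A p) (A q)"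
    using assms(1) unfolding is_pre_kite_def by blast
  \<comment> \<open>two distinct facet vertices, which exist since \<open>n \<ge> 2\<close>\<close>
  define p :: nat where "p = (if k = 0 then 1 else 0)"
  define q :: nat where "q = (if k = 2 then 1 else 2)"
  have "p \<le> n" "q \<le> n" "p \<noteq> k" "q \<noteq> k" "p \<noteq> q"
    using assms(2) unfolding p_def q_def by auto
  with facet that[OF k, of "dist (A p) (A q)"] show thesis by blast
qed

lemma sum_dist_sq_facet_vertex:
  fixes A :: "nat \<Rightarrow> 'a::metric_space"
  assumes "k \<le> n" "i \<le> n" "i \<noteq> k"
    and facet: "\<And>j. \<lbrakk>j \<le> n; j \<noteq> k; j \<noteq> i\<rbrakk> \<Longrightarrow> dist (A i) (A j) = d"
  shows "(\<Sum>l\<le>n. dist (A i) (A l) ^ 2) = real (n - 1) * d ^ 2 + dist (A i) (A k) ^ 2"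
proof -
  let ?f = "\<lambda>l. dist (A i) (A l) ^ 2"
  have "(\<Sum>l\<le>n. ?f l) = ?f i + (\<Sum>l\<in>{..n} - {i}. ?f l)"
    by (rule sum.remove) (use assms in auto)
  also have "(\<Sum>l\<in>{..n} - {i}. ?f l) = ?f k + (\<Sum>l\<in>{..n} - {i} - {k}. ?f l)"
    by (rule sum.remove) (use assms in auto)
  also have "(\<Sum>l\<in>{..n} - {i} - {k}. ?f l) = (\<Sum>l\<in>{..n} - {i} - {k}. d ^ 2)"
    using facet by (intro sum.cong) auto
  also have "\<dots> = real (n - 1) * d ^ 2"
    using assms(1-3) by (simp add: card_Diff_singleton)
  finally show ?thesis by simp
qed

lemma sum_dist_sq_apex:
  fixes A :: "nat \<Rightarrow> 'a::metric_space"
  assumes "k \<le> n" and lateral: "\<And>i. \<lbrakk>i \<le> n; i \<noteq> k\<rbrakk> \<Longrightarrow> dist (A i) (A k) = e"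
  shows "(\<Sum>l\<le>n. dist (A k) (A l) ^ 2) = real n * e ^ 2"
proof -
  have "(\<Sum>l\<le>n. dist (A k) (A l) ^ 2) = (\<Sum>l\<in>{..n} - {k}. dist (A k) (A l) ^ 2)"
    by (subst sum.remove[of _ k]) (use assms(1) in auto)
  also have "\<dots> = (\<Sum>l\<in>{..n} - {k}. e ^ 2)"
    using lateral by (intro sum.cong) (auto simp: dist_commute)
  also have "\<dots> = real n * e ^ 2"
    using assms(1) by (simp add: card_Diff_singleton)
  finally show ?thesis .
qed

lemma pre_kite_edges_eq_if_sum_dist_sq_const:
  fixes A :: "nat \<Rightarrow> 'a::metric_space"
  assumes "n \<ge> 2" "k \<le> n"
    and facet: "\<And>i j. \<lbrakk>i \<le> n; j \<le> n; i \<noteq> k; j \<noteq> k; i \<noteq> j\<rbrakk> \<Longrightarrow> dist (A i) (A j) = d"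
    and const: "\<And>i j. \<lbrakk>i \<le> n; j \<le> n\<rbrakk> \<Longrightarrow>
      (\<Sum>l\<le>n. dist (A i) (A l) ^ 2) = (\<Sum>l\<le>n. dist (A j) (A l) ^ 2)"
    and "i \<le> n" "j \<le> n" "i \<noteq> j"
  shows "dist (A i) (A j) = d"
proof -
  define a :: nat where "a = (if k = 0 then 1 else 0)"
  define b :: nat where "b = (if k = 2 then 1 else 2)"
  have a: "a \<le> n" "a \<noteq> k" and b: "b \<le> n" "b \<noteq> k" "b \<noteq> a"
    using assms(1) unfolding a_def b_def by auto
  define e where "e = dist (A a) (A k)"
  have S_facet: "(\<Sum>l\<le>n. dist (A i) (A l) ^ 2) = real (n - 1) * d ^ 2 + dist (A i) (A k) ^ 2"
    if "i \<le> n" "i \<noteq> k" for i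
    by (rule sum_dist_sq_facet_vertex[OF assms(2) that]) (use facet that in auto)
  have lateral: "dist (A i) (A k) = e" if "i \<le> n" "i \<noteq> k" for i
  proof -
    have "dist (A i) (A k) ^ 2 = e ^ 2"
      using const[of i a] S_facet[OF that] S_facet[OF a] that a unfolding e_def by simp
    then show ?thesis by (simp add: power2_eq_iff_nonneg e_def)
  qed
  have "real n * e ^ 2 = real (n - 1) * d ^ 2 + e ^ 2"
    using const[OF assms(2) a(1)] sum_dist_sq_apex[of k n A e, OF assms(2) lateral] S_facet[OF a]
    by (simp add: e_def)
  then have "(real n - 1) * (e ^ 2 - d ^ 2) = 0"
    using assms(1) by (simp add: of_nat_diff algebra_simps)
  with assms(1) have "e ^ 2 = d ^ 2" by simp
  moreover have "d \<ge> 0" using facet[OF a(1) b(1) a(2) b(2)] b(3) by force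
  ultimately have "e = d" by (simp add: power2_eq_iff_nonneg e_def)
  consider "i = k" | "j = k" | "i \<noteq> k" "j \<noteq> k" by blast
  then show ?thesis
  proof cases
    case 1
    then show ?thesis using lateral[of j] assms(6,7) \<open>e = d\<close> by (simp add: dist_commute)
  next
    case 2
    then show ?thesis using lateral[of i] assms(5,7) \<open>e = d\<close> by simp
  next
    case 3
    then show ?thesis using facet assms(5-7) by blast
  qed
qed

theorem theorem6p2:
  fixes A :: "nat \<Rightarrow> 'a::euclidean_space" and n :: nat
  assumes "n \<ge> 2"
    and "is_pre_kite n A"
    and "circumcenter n A = centroid n A"
  shows "is_regular_simplex n A"
proof -
  have simplex: "is_simplex n A" using assms(2) by (simp add: is_pre_kite_def)
  obtain k d where k: "k \<le> n"
    and facet: "\<And>i j. \<lbrakk>i \<le> n; j \<le> n; i \<noteq> k; j \<noteq> k; i \<noteq> j\<rbrakk> \<Longrightarrow> dist (A i) (A j) = d"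
    using pre_kite_facet_edges[OF assms(2,1)] by metis
  have equidistant: "dist (A i) (centroid n A) = dist (A 0) (centroid n A)" if "i \<le> n" for i
    using dist_circumcenter_vertex[OF simplex that] assms(3) by (simp add: dist_commute)
  have sum_const: "(\<Sum>l\<le>n. dist (A i) (A l) ^ 2) = (\<Sum>l\<le>n. dist (A j) (A l) ^ 2)"
    if "i \<le> n" "j \<le> n" for i j
    by (simp only: sum_dist_sq_centroid equidistant[OF that(1)] equidistant[OF that(2)])
  have "dist (A i) (A j) = d" if "i \<le> n" "j \<le> n" "i \<noteq> j" for i j
    by (rule pre_kite_edges_eq_if_sum_dist_sq_const[OF assms(1) k facet sum_const that])
  then show ?thesis using simplex unfolding is_regular_simplex_def by metis
qed

end
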